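(* With the emerging metric on finite residue rings described in the context, the finite rings $\mathbb{Z}/n\mathbb{Z}$ locally approximate the real numbers: $\mathsf{lm}^{\mathrm{loc}}\,\mathrm{K}_n=\mathbb{R}$. That is, the relation $\approx$ on $\mathrm{K}_{/\mathfrak{l}}$ is compatible with the ring operations of $\mathrm{K}$, and the quotient $\mathrm{K}_{/\mathfrak{l}}/\!\approx$ with the induced operations and metric is isomorphic to $(\mathbb{R},+,\cdot)$ with the metric $|x-y|$.
   Context: Let $\mathcal{D}$ be a non-principal ultrafilter on $\mathbb{N}$ containing the set of primes, ${}^*\mathbb{Z}=\mathbb{Z}^{\mathbb{N}}/\mathcal{D}$, and $\mathfrak{q}\in{}^*\mathbb{Z}$ the class of $(q)_{q\in\mathbb{N}}$; let $\mathrm{F}={}^*\mathbb{Z}/\mathfrak{q}\,{}^*\mathbb{Z}\cong\prod_{\mathcal{D}}\mathbb{Z}/q\mathbb{Z}$. Assume there is a model ${}^f\mathbb{Z}$ of arithmetic with $\mathbb{Z}\prec{}^f\mathbb{Z}\prec{}^*\mathbb{Z}$ such that $\mathfrak{q}>k$ for all $k\in{}^f\mathbb{Z}$, and let $\mathfrak{l}\in{}^f\mathbb{Z}$ be a positive infinite integer (so $\mathfrak{l}^n<\mathfrak{q}$ for all $n\in\mathbb{N}$). Let $\mathcal{N}\in{}^*\mathbb{Z}$, $\mathcal{N}\ge\mathfrak{q}$, be the class of a sequence of positive integers $(n_j)_j$ with $\mathfrak{q}\mid\mathcal{N}$, and $\mathrm{K}={}^*\mathbb{Z}/\mathcal{N}\,{}^*\mathbb{Z}\cong\prod_{\mathcal{D}}\mathbb{Z}/n_j\mathbb{Z}$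 (the rings $\mathrm{K}_n=\mathbb{Z}/n\mathbb{Z}$); let $s:\mathrm{K}\to\mathrm{F}$ be reduction mod $\mathfrak{q}$. On $\mathrm{F}$: for $m\in\mathbb{N}$ let $Z(m)=\{k\in{}^*\mathbb{Z}:|k|<\mathfrak{l}^m\}$ (embedded in $\mathrm{F}$ by reduction), $S_m(\mathrm{F})=\{z\in\mathrm{F}:\exists k_1,k_2\in Z(m),k_2\neq0,\ z=k_1k_2^{-1},\ |k_1|/|k_2|\le m\}$, $\mathrm{F}_{/\mathfrak{l}}=\bigcup_m S_m(\mathrm{F})$, $\|z\|=\mathrm{st}(|k_1|/|k_2|)$ for the minimal such pair, $\mathsf{d}_F(z_1,z_2)=\|z_1-z_2\|$. On $\mathrm{K}$: $\mathrm{K}_{/\mathfrak{l}}=s^{-1}(\mathrm{F}_{/\mathfrak{l}})$ and $\mathsf{d}_K(x,y)=\mathsf{d}_F(s(x),s(y))$. Define $x\approx y$ iff $\mathsf{d}_K(x,y)\le1/n$ for all $n\in\mathbb{N}$. The local ultraproduct of the $\mathrm{K}_n$ is $\mathrm{K}_{/\mathfrak{l}}/\!\approx$ with induced operations and metric. *)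

theory Defs
  imports Complex_Main "HOL-Computational_Algebra.Primes" "HOL-Number_Theory.Cong"
begin

text \<open>Ultrapowers over nat are represented by sequences (representatives);
  a property holds in the ultrapower iff the set of indices where it holds lies in D.\<close>

definition nonprincipal_ultrafilter :: "nat set set \<Rightarrow> bool" where
  "nonprincipal_ultrafilter D \<longleftrightarrow>
     UNIV \<in> D \<and> {} \<notin> D \<and>
     (\<forall>A B. A \<in> D \<and> A \<subseteq> B \<longrightarrow> B \<in> D) \<and>
     (\<forall>A B. A \<in> D \<and> B \<in> D \<longrightarrow> A \<inter> B \<in> D) \<and>
     (\<forall>A. A \<in> D \<or> - A \<in> D) \<and>
     (\<forall>A. finite A \<longrightarrow> A \<notin> D)"

definition ae :: "nat set set \<Rightarrow> (nat \<Rightarrow> bool) \<Rightarrow> bool" where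
  "ae D P \<longleftrightarrow> {j. P j} \<in> D"

definition Zset :: "nat set set \<Rightarrow> (nat \<Rightarrow> int) \<Rightarrow> nat \<Rightarrow> (nat \<Rightarrow> int) set" where
  "Zset D l m = {k. ae D (\<lambda>j. \<bar>k j\<bar> < l j ^ m)}"

text \<open>z (an element of F = *Z / q *Z, q = class of (j)_j) equals k1 * k2^(-1) with
  k1, k2 in Z(m), k2 nonzero, and |k1|/|k2| <= m.\<close>
definition quot_rep :: "nat set set \<Rightarrow> (nat \<Rightarrow> int) \<Rightarrow> nat \<Rightarrow> (nat \<Rightarrow> int)
    \<Rightarrow> (nat \<Rightarrow> int) \<Rightarrow> (nat \<Rightarrow> int) \<Rightarrow> bool" where
  "quot_rep D l m z k1 k2 \<longleftrightarrow>
     k1 \<in> Zset D l m \<and> k2 \<in> Zset D l m \<and> \<not> ae D (\<lambda>j. k2 j = 0) \<and>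
     ae D (\<lambda>j. [z j * k2 j = k1 j] (mod int j)) \<and>
     ae D (\<lambda>j. \<bar>k1 j\<bar> \<le> int m * \<bar>k2 j\<bar>)"

definition Sm :: "nat set set \<Rightarrow> (nat \<Rightarrow> int) \<Rightarrow> nat \<Rightarrow> (nat \<Rightarrow> int) set" where
  "Sm D l m = {z. \<exists>k1 k2. quot_rep D l m z k1 k2}"

definition Fl :: "nat set set \<Rightarrow> (nat \<Rightarrow> int) \<Rightarrow> (nat \<Rightarrow> int) set" where
  "Fl D l = (\<Union>m. Sm D l m)"

definition is_st :: "nat set set \<Rightarrow> (nat \<Rightarrow> real) \<Rightarrow> real \<Rightarrow> bool" where
  "is_st D r a \<longleftrightarrow> (\<forall>\<epsilon>>0. ae D (\<lambda>j. \<bar>r j - a\<bar> < \<epsilon>))"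

definition fnorm :: "nat set set \<Rightarrow> (nat \<Rightarrow> int) \<Rightarrow> (nat \<Rightarrow> int) \<Rightarrow> real" where
  "fnorm D l z = (SOME a. \<exists>m k1 k2. quot_rep D l m z k1 k2 \<and>
       is_st D (\<lambda>j. \<bar>real_of_int (k1 j)\<bar> / \<bar>real_of_int (k2 j)\<bar>) a)"

definition dF :: "nat set set \<Rightarrow> (nat \<Rightarrow> int) \<Rightarrow> (nat \<Rightarrow> int) \<Rightarrow> (nat \<Rightarrow> int) \<Rightarrow> real" where
  "dF D l z1 z2 = fnorm D l (\<lambda>j. z1 j - z2 j)"

text \<open>K = *Z / N *Z, elements represented by sequences of residues 0 <= x j < N j\<close>
definition Kcar :: "(nat \<Rightarrow> nat) \<Rightarrow> (nat \<Rightarrow> int) set" where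
  "Kcar N = {x. \<forall>j. 0 \<le> x j \<and> x j < int (N j)}"

definition addK :: "(nat \<Rightarrow> nat) \<Rightarrow> (nat \<Rightarrow> int) \<Rightarrow> (nat \<Rightarrow> int) \<Rightarrow> (nat \<Rightarrow> int)" where
  "addK N x y = (\<lambda>j. (x j + y j) mod int (N j))"

definition mulK :: "(nat \<Rightarrow> nat) \<Rightarrow> (nat \<Rightarrow> int) \<Rightarrow> (nat \<Rightarrow> int) \<Rightarrow> (nat \<Rightarrow> int)" where
  "mulK N x y = (\<lambda>j. (x j * y j) mod int (N j))"

definition negK :: "(nat \<Rightarrow> nat) \<Rightarrow> (nat \<Rightarrow> int) \<Rightarrow> (nat \<Rightarrow> int)" where
  "negK N x = (\<lambda>j. (- x j) mod int (N j))"

definition oneK :: "(nat \<Rightarrow> nat) \<Rightarrow> (nat \<Rightarrow> int)" where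
  "oneK N = (\<lambda>j. 1 mod int (N j))"

definition red_q :: "(nat \<Rightarrow> int) \<Rightarrow> (nat \<Rightarrow> int)" where
  "red_q x = (\<lambda>j. x j mod int j)"

definition Kl :: "nat set set \<Rightarrow> (nat \<Rightarrow> int) \<Rightarrow> (nat \<Rightarrow> nat) \<Rightarrow> (nat \<Rightarrow> int) set" where
  "Kl D l N = {x \<in> Kcar N. red_q x \<in> Fl D l}"

definition dK :: "nat set set \<Rightarrow> (nat \<Rightarrow> int) \<Rightarrow> (nat \<Rightarrow> int) \<Rightarrow> (nat \<Rightarrow> int) \<Rightarrow> real" where
  "dK D l x y = dF D l (red_q x) (red_q y)"

definition approx :: "nat set set \<Rightarrow> (nat \<Rightarrow> int) \<Rightarrow> (nat \<Rightarrow> int) \<Rightarrow> (nat \<Rightarrow> int) \<Rightarrow> bool" where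
  "approx D l x y \<longleftrightarrow> (\<forall>n::nat. n > 0 \<longrightarrow> dK D l x y \<le> 1 / real n)"

definition approx_rel :: "nat set set \<Rightarrow> (nat \<Rightarrow> int) \<Rightarrow> (nat \<Rightarrow> nat) \<Rightarrow> ((nat \<Rightarrow> int) \<times> (nat \<Rightarrow> int)) set" where
  "approx_rel D l N = {(x, y). x \<in> Kl D l N \<and> y \<in> Kl D l N \<and> approx D l x y}"

end

theory Submission
  imports Defs "HOL-Analysis.Elementary_Topology"
begin

(*
  An element z of F_{/l} is the residue modulo q of a fraction a/b with |a|, |b| < l^m and
  |a/b| <= m for some standard m. Any two such representations a/b and c/d of z agree exactly:
  q divides ad - cb, while |ad - cb| < 2 l^(2m) < q. Since bounded sequences converge along an
  ultrafilter, z therefore has a well-defined standard value st(a/b). Representations add and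
  multiply like fractions, so this value is a ring homomorphism on K_{/l}, and the norm of z is
  its absolute value; hence x ~ y iff x and y have the same value. Every real r is the value of
  the residue of floor(r l)/l, which exists because l is invertible modulo the prime q > l.
  So K_{/l}/~ is the quotient of K_{/l} by the kernel of a surjective isometric ring
  homomorphism onto R.
*)

definition kernel_on :: "'a set \<Rightarrow> ('a \<Rightarrow> 'b) \<Rightarrow> ('a \<times> 'a) set" where
  "kernel_on A f = {(x, y). x \<in> A \<and> y \<in> A \<and> f x = f y}"

lemma equiv_kernel_on: "equiv A (kernel_on A f)"
  by (auto simp: equiv_def refl_on_def sym_def trans_def kernel_on_def)

lemma the_elem_image_kernel_on_class:
  "x \<in> A \<Longrightarrow> the_elem (f ` (kernel_on A f `` {x})) = f x"
proof -
  assume "x \<in> A"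
  then have "f ` (kernel_on A f `` {x}) = {f x}" by (auto simp: kernel_on_def)
  then show ?thesis by simp
qed

lemma bij_betw_the_elem_image_quotient_kernel_on:
  "bij_betw (\<lambda>C. the_elem (f ` C)) (A // kernel_on A f) (f ` A)"
proof (rule bij_betwI')
  fix C C' assume "C \<in> A // kernel_on A f" "C' \<in> A // kernel_on A f"
  then obtain x x' where x: "x \<in> A" "C = kernel_on A f `` {x}"
    and x': "x' \<in> A" "C' = kernel_on A f `` {x'}"
    by (metis quotientE)
  then have "C = C' \<longleftrightarrow> f x = f x'" by (auto simp: kernel_on_def)
  then show "the_elem (f ` C) = the_elem (f ` C') \<longleftrightarrow> C = C'"
    using x x' by (simp add: the_elem_image_kernel_on_class)
next
  fix C assume "C \<in> A // kernel_on A f"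
  then show "the_elem (f ` C) \<in> f ` A"
    by (elim quotientE) (simp add: the_elem_image_kernel_on_class)
next
  fix y assume "y \<in> f ` A"
  then obtain x where "x \<in> A" "y = f x" by blast
  then show "\<exists>C \<in> A // kernel_on A f. y = the_elem (f ` C)"
    by (metis quotientI the_elem_image_kernel_on_class)
qed

definition bounded_frac_rep :: "int \<Rightarrow> nat \<Rightarrow> int \<Rightarrow> int \<Rightarrow> int \<Rightarrow> int \<Rightarrow> bool" where
  "bounded_frac_rep L m q z a b \<longleftrightarrow>
     \<bar>a\<bar> < L ^ m \<and> \<bar>b\<bar> < L ^ m \<and> b \<noteq> 0 \<and> [z * b = a] (mod q) \<and> \<bar>a\<bar> \<le> int m * \<bar>b\<bar>"

lemma abs_mult_less_power_add:
  fixes a b L :: int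
  assumes "\<bar>a\<bar> < L ^ m" "\<bar>b\<bar> < L ^ n"
  shows "\<bar>a * b\<bar> < L ^ (m + n)"
proof -
  have "\<bar>a\<bar> * \<bar>b\<bar> < L ^ m * L ^ n"
    using assms by (intro mult_strict_mono) auto
  then show ?thesis by (simp add: abs_mult power_add)
qed

lemma bounded_frac_rep_products:
  assumes "bounded_frac_rep L m1 q z1 a b" "bounded_frac_rep L m2 q z2 c d"
  shows "\<bar>a * d\<bar> < L ^ (m1 + m2)" "\<bar>c * b\<bar> < L ^ (m1 + m2)"
    and "\<bar>a * c\<bar> < L ^ (m1 + m2)" "\<bar>b * d\<bar> < L ^ (m1 + m2)"
proof -
  have "\<bar>a\<bar> < L ^ m1" "\<bar>b\<bar> < L ^ m1" "\<bar>c\<bar> < L ^ m2" "\<bar>d\<bar> < L ^ m2"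
    using assms unfolding bounded_frac_rep_def by auto
  then show "\<bar>a * d\<bar> < L ^ (m1 + m2)" "\<bar>c * b\<bar> < L ^ (m1 + m2)"
    and "\<bar>a * c\<bar> < L ^ (m1 + m2)" "\<bar>b * d\<bar> < L ^ (m1 + m2)"
    using abs_mult_less_power_add[of c L m2 b m1]
    by (auto simp: add.commute intro: abs_mult_less_power_add)
qed

lemma bounded_frac_rep_unique:
  assumes "bounded_frac_rep L m1 q z a b" "bounded_frac_rep L m2 q z c d"
    and "2 * L ^ (m1 + m2) \<le> q"
  shows "a * d = c * b"
proof -
  have "[a * d = z * b * d] (mod q)" "[z * d * b = c * b] (mod q)"
    using assms(1,2) unfolding bounded_frac_rep_def by (auto intro: cong_scalar_right cong_sym)
  then have "q dvd a * d - c * b"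
    by (metis cong_iff_dvd_diff cong_trans mult.commute mult.left_commute)
  moreover have "\<bar>a * d - c * b\<bar> < q"
    using bounded_frac_rep_products[OF assms(1,2)] assms(3) by linarith
  ultimately show ?thesis
    using dvd_imp_le_int[of "a * d - c * b" q] by fastforce
qed

lemma bounded_frac_rep_add:
  assumes "2 \<le> L" "bounded_frac_rep L m1 q z1 a b" "bounded_frac_rep L m2 q z2 c d"
  shows "bounded_frac_rep L (m1 + m2 + 1) q (z1 + z2) (a * d + c * b) (b * d)"
  unfolding bounded_frac_rep_def
proof (intro conjI)
  have "2 * L ^ (m1 + m2) \<le> L ^ (m1 + m2 + 1)"
    using assms(1) by (simp add: mult_right_mono)
  moreover note bounded_frac_rep_products[OF assms(2,3)]
  moreover have "\<bar>L ^ (m1 + m2)\<bar> \<le> L ^ (m1 + m2 + 1)"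
    using assms(1) by (simp add: mult_right_mono)
  ultimately show "\<bar>a * d + c * b\<bar> < L ^ (m1 + m2 + 1)" "\<bar>b * d\<bar> < L ^ (m1 + m2 + 1)"
    by linarith+
  show "b * d \<noteq> 0" using assms(2,3) by (simp add: bounded_frac_rep_def)
  have "[z1 * b * d + z2 * d * b = a * d + c * b] (mod q)"
    using assms(2,3) unfolding bounded_frac_rep_def by (intro cong_add cong_scalar_right) auto
  then show "[(z1 + z2) * (b * d) = a * d + c * b] (mod q)"
    by (simp add: algebra_simps)
  have "\<bar>a * d + c * b\<bar> \<le> \<bar>a\<bar> * \<bar>d\<bar> + \<bar>c\<bar> * \<bar>b\<bar>"
    by (metis abs_mult abs_triangle_ineq)
  also have "\<dots> \<le> (int m1 * \<bar>b\<bar>) * \<bar>d\<bar> + (int m2 * \<bar>d\<bar>) * \<bar>b\<bar>"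
    using assms(2,3) unfolding bounded_frac_rep_def by (intro add_mono mult_right_mono) auto
  also have "\<dots> \<le> int (m1 + m2 + 1) * \<bar>b * d\<bar>"
    by (simp add: abs_mult algebra_simps)
  finally show "\<bar>a * d + c * b\<bar> \<le> int (m1 + m2 + 1) * \<bar>b * d\<bar>" .
qed

lemma bounded_frac_rep_mult:
  assumes "2 \<le> L" "bounded_frac_rep L m1 q z1 a b" "bounded_frac_rep L m2 q z2 c d"
  shows "bounded_frac_rep L (m1 * m2 + m1 + m2) q (z1 * z2) (a * c) (b * d)"
  unfolding bounded_frac_rep_def
proof (intro conjI)
  have "L ^ (m1 + m2) \<le> L ^ (m1 * m2 + m1 + m2)"
    using assms(1) by (intro power_increasing) auto
  with bounded_frac_rep_products[OF assms(2,3)]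
  show "\<bar>a * c\<bar> < L ^ (m1 * m2 + m1 + m2)" "\<bar>b * d\<bar> < L ^ (m1 * m2 + m1 + m2)"
    by linarith+
  show "b * d \<noteq> 0" using assms(2,3) by (simp add: bounded_frac_rep_def)
  have "[(z1 * b) * (z2 * d) = a * c] (mod q)"
    using assms(2,3) unfolding bounded_frac_rep_def by (intro cong_mult) auto
  then show "[(z1 * z2) * (b * d) = a * c] (mod q)"
    by (simp add: algebra_simps)
  have "\<bar>a * c\<bar> \<le> (int m1 * \<bar>b\<bar>) * (int m2 * \<bar>d\<bar>)"
    using assms(2,3) unfolding bounded_frac_rep_def abs_mult by (intro mult_mono) auto
  also have "\<dots> \<le> int (m1 * m2 + m1 + m2) * \<bar>b * d\<bar>"
    by (simp add: abs_mult algebra_simps mult_right_mono)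
  finally show "\<bar>a * c\<bar> \<le> int (m1 * m2 + m1 + m2) * \<bar>b * d\<bar>" .
qed

lemma bounded_frac_rep_uminus:
  "bounded_frac_rep L m q z a b \<Longrightarrow> bounded_frac_rep L m q (- z) (- a) b"
  by (simp add: bounded_frac_rep_def cong_minus_minus_iff)

lemma bounded_frac_rep_cong:
  "[z' = z] (mod q) \<Longrightarrow> bounded_frac_rep L m q z a b \<Longrightarrow> bounded_frac_rep L m q z' a b"
  unfolding bounded_frac_rep_def by (meson cong_scalar_right cong_trans)

lemma bounded_frac_rep_one: "1 < L \<Longrightarrow> bounded_frac_rep L 1 q 1 1 1"
  by (simp add: bounded_frac_rep_def)

lemma bounded_frac_rep_abs_divide_le:
  assumes "bounded_frac_rep L m q z a b"
  shows "\<bar>of_int a / of_int b\<bar> \<le> real m"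
proof -
  have "real_of_int \<bar>a\<bar> \<le> real_of_int (int m * \<bar>b\<bar>)" "b \<noteq> 0"
    using assms unfolding bounded_frac_rep_def of_int_le_iff by auto
  then show ?thesis by (simp add: abs_divide divide_le_eq)
qed

lemma bounded_frac_rep_floor:
  fixes r :: real and L u q :: int
  assumes "\<bar>r\<bar> + 1 \<le> real m" "2 \<le> m" "int m < L" "[L * u = 1] (mod q)"
  shows "bounded_frac_rep L m q (\<lfloor>r * of_int L\<rfloor> * u) \<lfloor>r * of_int L\<rfloor> L"
  unfolding bounded_frac_rep_def
proof (intro conjI)
  define k where "k = \<lfloor>r * of_int L\<rfloor>"
  have L: "real m < of_int L" "2 \<le> L" using assms(2,3) by linarith+
  have "of_int k \<le> r * of_int L" "r * of_int L < of_int k + 1"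
    unfolding k_def by (rule of_int_floor_le, rule real_of_int_floor_add_one_gt)
  moreover have "\<bar>r * of_int L\<bar> \<le> (real m - 1) * of_int L"
    using assms(1) L by (simp add: abs_mult mult_right_mono)
  ultimately have "real_of_int \<bar>k\<bar> \<le> real_of_int (int m * L)"
    using L by (simp add: algebra_simps)
  then have "\<bar>k\<bar> \<le> int m * L" by (simp only: of_int_le_iff)
  then have k: "\<bar>k\<bar> \<le> int m * \<bar>L\<bar>" using L by simp
  have "int m * L < L * L" using L by (intro mult_strict_right_mono) auto
  also have "\<dots> \<le> L ^ m" using L assms(2) power_increasing[of 2 m L] by (simp add: power2_eq_square)
  finally have mL: "int m * L < L ^ m" .
  show "\<bar>\<lfloor>r * of_int L\<rfloor>\<bar> < L ^ m" "\<bar>\<lfloor>r * of_int L\<rfloor>\<bar> \<le> int m * \<bar>L\<bar>"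
    using k mL L unfolding k_def by auto
  have "L < int m * L" using mult_strict_right_mono[of 1 "int m" L] L assms(2) by simp
  then have "L < L ^ m" using mL by linarith
  then show "\<bar>L\<bar> < L ^ m" "L \<noteq> 0" using L by auto
  have "[\<lfloor>r * of_int L\<rfloor> * (L * u) = \<lfloor>r * of_int L\<rfloor> * 1] (mod q)"
    using assms(4) by (rule cong_scalar_left)
  then show "[\<lfloor>r * of_int L\<rfloor> * u * L = \<lfloor>r * of_int L\<rfloor>] (mod q)"
    by (simp add: algebra_simps)
qed

lemma abs_floor_mult_divide_less:
  fixes r :: real and L :: int
  assumes "0 < L"
  shows "\<bar>of_int \<lfloor>r * of_int L\<rfloor> / of_int L - r\<bar> < 1 / of_int L"
proof -
  have "of_int \<lfloor>r * of_int L\<rfloor> \<le> r * of_int L" "r * of_int L < of_int \<lfloor>r * of_int L\<rfloor> + 1"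
    by (rule of_int_floor_le, rule real_of_int_floor_add_one_gt)
  then have "\<bar>of_int \<lfloor>r * of_int L\<rfloor> - r * of_int L\<bar> < 1" by linarith
  then have "\<bar>of_int \<lfloor>r * of_int L\<rfloor> - r * of_int L\<bar> / of_int L < 1 / of_int L"
    using assms by (simp add: divide_strict_right_mono)
  moreover have "of_int \<lfloor>r * of_int L\<rfloor> / of_int L - r = (of_int \<lfloor>r * of_int L\<rfloor> - r * of_int L) / of_int L"
    using assms by (simp add: field_simps)
  ultimately show ?thesis using assms by (simp add: abs_divide)
qed

definition ae_filter :: "nat set set \<Rightarrow> nat filter" where
  "ae_filter D = Abs_filter (ae D)"

locale index_ultrafilter =
  fixes D :: "nat set set"
  assumes ultrafilter: "nonprincipal_ultrafilter D"
begin

lemma eventually_ae_filter: "eventually P (ae_filter D) \<longleftrightarrow> ae D P"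
proof -
  have "is_filter (ae D)"
  proof
    show "ae D (\<lambda>j. True)"
      using ultrafilter by (simp add: nonprincipal_ultrafilter_def ae_def)
  next
    fix P Q assume "ae D P" "ae D Q"
    moreover have "{j. P j \<and> Q j} = {j. P j} \<inter> {j. Q j}" by auto
    ultimately show "ae D (\<lambda>j. P j \<and> Q j)"
      using ultrafilter by (simp add: nonprincipal_ultrafilter_def ae_def)
  next
    fix P Q assume "\<forall>j. P j \<longrightarrow> Q j" "ae D P"
    then show "ae D Q"
      using ultrafilter unfolding nonprincipal_ultrafilter_def ae_def
      by (metis (mono_tags) mem_Collect_eq subsetI)
  qed
  then show ?thesis by (simp add: ae_filter_def eventually_Abs_filter)
qed

lemma ae_filter_neq_bot [simp]: "ae_filter D \<noteq> bot"
  using ultrafilter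
  by (simp add: trivial_limit_def eventually_ae_filter nonprincipal_ultrafilter_def ae_def)

lemma not_eventually_ae_filter:
  "\<not> eventually P (ae_filter D) \<longleftrightarrow> eventually (\<lambda>j. \<not> P j) (ae_filter D)"
proof
  assume "\<not> eventually P (ae_filter D)"
  then show "eventually (\<lambda>j. \<not> P j) (ae_filter D)"
    using ultrafilter unfolding eventually_ae_filter nonprincipal_ultrafilter_def ae_def
    by (metis Collect_neg_eq)
next
  assume "eventually (\<lambda>j. \<not> P j) (ae_filter D)"
  then show "\<not> eventually P (ae_filter D)"
    using eventually_conj eventually_False ae_filter_neq_bot by fastforce
qed

lemma is_st_iff_tendsto: "is_st D r a \<longleftrightarrow> (r \<longlongrightarrow> a) (ae_filter D)"
  by (simp add: is_st_def tendsto_iff dist_real_def eventually_ae_filter)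

lemma cluster_point_imp_tendsto:
  fixes x :: real
  assumes "inf (nhds x) (filtermap r (ae_filter D)) \<noteq> bot"
  shows "(r \<longlongrightarrow> x) (ae_filter D)"
  unfolding tendsto_def
proof (intro allI impI)
  fix S :: "real set" assume S: "open S" "x \<in> S"
  show "eventually (\<lambda>j. r j \<in> S) (ae_filter D)"
  proof (rule ccontr)
    assume "\<not> eventually (\<lambda>j. r j \<in> S) (ae_filter D)"
    then have "eventually (\<lambda>y. y \<notin> S) (filtermap r (ae_filter D))"
      by (simp add: eventually_filtermap not_eventually_ae_filter)
    moreover have "eventually (\<lambda>y. y \<in> S) (nhds x)" using S by (rule eventually_nhds_in_open)
    ultimately have "eventually (\<lambda>y. False) (inf (nhds x) (filtermap r (ae_filter D)))"
      unfolding eventually_inf by blast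
    then show False using assms by (simp add: eventually_False)
  qed
qed

lemma bounded_tendsto_ae_filter:
  fixes r :: "nat \<Rightarrow> real"
  assumes "eventually (\<lambda>j. \<bar>r j\<bar> \<le> B) (ae_filter D)"
  shows "\<exists>a. (r \<longlongrightarrow> a) (ae_filter D)"
proof -
  have "eventually (\<lambda>y. y \<in> {-B..B}) (filtermap r (ae_filter D))"
    using assms unfolding eventually_filtermap by (rule eventually_mono) auto
  moreover have "filtermap r (ae_filter D) \<noteq> bot" by (simp add: filtermap_bot_iff)
  ultimately obtain x where "inf (nhds x) (filtermap r (ae_filter D)) \<noteq> bot"
    using compact_Icc[of "-B" B] unfolding compact_filter by blast
  then show ?thesis using cluster_point_imp_tendsto by blast
qed

end

definition ratio_seq :: "(nat \<Rightarrow> int) \<Rightarrow> (nat \<Rightarrow> int) \<Rightarrow> nat \<Rightarrow> real" where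
  "ratio_seq a b j = of_int (a j) / of_int (b j)"

locale local_ultraproduct = index_ultrafilter +
  fixes l :: "nat \<Rightarrow> int" and N :: "nat \<Rightarrow> nat"
  assumes primes: "{p. prime p} \<in> D"
    and l_unbounded: "\<forall>k::int. ae D (\<lambda>j. k < l j)"
    and l_powers_below: "\<forall>n::nat. ae D (\<lambda>j. l j ^ n < int j)"
    and N_pos: "\<forall>j. 0 < N j"
    and dvd_N: "ae D (\<lambda>j. j dvd N j)"
begin

lemma eventually_greater_l: "eventually (\<lambda>j. k < l j) (ae_filter D)"
  using l_unbounded by (simp add: eventually_ae_filter)

lemma eventually_double_power_l_le: "eventually (\<lambda>j. 2 * l j ^ n \<le> int j) (ae_filter D)"
proof -
  have "eventually (\<lambda>j. l j ^ Suc n < int j) (ae_filter D)"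
    using l_powers_below unfolding eventually_ae_filter by blast
  with eventually_greater_l[of 1] show ?thesis
  proof eventually_elim
    case (elim j)
    then have "2 * l j ^ n \<le> l j ^ Suc n" by (simp add: mult_right_mono)
    then show ?case using elim by linarith
  qed
qed

definition frac_rep :: "(nat \<Rightarrow> int) \<Rightarrow> (nat \<Rightarrow> int) \<Rightarrow> (nat \<Rightarrow> int) \<Rightarrow> bool" where
  "frac_rep z a b \<longleftrightarrow>
     (\<exists>m. eventually (\<lambda>j. bounded_frac_rep (l j) m (int j) (z j) (a j) (b j)) (ae_filter D))"

lemma quot_rep_iff_eventually:
  "quot_rep D l m z a b \<longleftrightarrow>
     eventually (\<lambda>j. bounded_frac_rep (l j) m (int j) (z j) (a j) (b j)) (ae_filter D)"
  unfolding quot_rep_def Zset_def bounded_frac_rep_def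
  by (simp add: eventually_conj_iff not_eventually_ae_filter flip: eventually_ae_filter)

lemma mem_Fl_iff: "z \<in> Fl D l \<longleftrightarrow> (\<exists>a b. frac_rep z a b)"
  by (auto simp: Fl_def Sm_def frac_rep_def quot_rep_iff_eventually)

lemma frac_rep_ratio_eventually_eq:
  assumes "frac_rep z a b" "frac_rep z c d"
  shows "eventually (\<lambda>j. ratio_seq a b j = ratio_seq c d j) (ae_filter D)"
proof -
  obtain m1 m2 where
      "eventually (\<lambda>j. bounded_frac_rep (l j) m1 (int j) (z j) (a j) (b j)) (ae_filter D)"
      "eventually (\<lambda>j. bounded_frac_rep (l j) m2 (int j) (z j) (c j) (d j)) (ae_filter D)"
    using assms unfolding frac_rep_def by blast
  with eventually_double_power_l_le[of "m1 + m2"] show ?thesis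
  proof eventually_elim
    case (elim j)
    have "a j * d j = c j * b j"
      using elim by (intro bounded_frac_rep_unique) auto
    moreover have "b j \<noteq> 0" "d j \<noteq> 0"
      using elim by (auto simp: bounded_frac_rep_def)
    ultimately have "real_of_int (a j) * of_int (d j) = of_int (c j) * of_int (b j)" "b j \<noteq> 0" "d j \<noteq> 0"
      by (metis of_int_mult)+
    then show ?case by (simp add: ratio_seq_def field_simps)
  qed
qed

lemma frac_rep_convergent:
  assumes "frac_rep z a b"
  shows "\<exists>v. (ratio_seq a b \<longlongrightarrow> v) (ae_filter D)"
proof -
  obtain m where "eventually (\<lambda>j. bounded_frac_rep (l j) m (int j) (z j) (a j) (b j)) (ae_filter D)"
    using assms unfolding frac_rep_def by blast
  then have "eventually (\<lambda>j. \<bar>ratio_seq a b j\<bar> \<le> real m) (ae_filter D)"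
    by (rule eventually_mono) (unfold ratio_seq_def, rule bounded_frac_rep_abs_divide_le)
  then show ?thesis by (rule bounded_tendsto_ae_filter)
qed

definition frac_value :: "(nat \<Rightarrow> int) \<Rightarrow> real" where
  "frac_value z = (THE v. \<exists>a b. frac_rep z a b \<and> (ratio_seq a b \<longlongrightarrow> v) (ae_filter D))"

lemma frac_value_eqI:
  assumes "frac_rep z a b" "(ratio_seq a b \<longlongrightarrow> v) (ae_filter D)"
  shows "frac_value z = v"
  unfolding frac_value_def
proof (rule the_equality)
  fix w assume "\<exists>c d. frac_rep z c d \<and> (ratio_seq c d \<longlongrightarrow> w) (ae_filter D)"
  then obtain c d where cd: "frac_rep z c d" "(ratio_seq c d \<longlongrightarrow> w) (ae_filter D)" by blast
  have "(ratio_seq a b \<longlongrightarrow> w) (ae_filter D)"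
    using cd(2) frac_rep_ratio_eventually_eq[OF cd(1) assms(1)] by (rule Lim_transform_eventually)
  then show "w = v" using assms(2) by (rule tendsto_unique[OF ae_filter_neq_bot])
qed (use assms in blast)

lemma tendsto_frac_value:
  "frac_rep z a b \<Longrightarrow> (ratio_seq a b \<longlongrightarrow> frac_value z) (ae_filter D)"
  using frac_rep_convergent frac_value_eqI by blast

lemma fnorm_eq_abs_frac_value:
  assumes "frac_rep z a b"
  shows "fnorm D l z = \<bar>frac_value z\<bar>"
proof -
  have abs_ratio: "(\<lambda>j. \<bar>real_of_int (c j)\<bar> / \<bar>real_of_int (d j)\<bar>) = (\<lambda>j. \<bar>ratio_seq c d j\<bar>)"
    for c d by (simp add: ratio_seq_def)
  show ?thesis
    unfolding fnorm_def abs_ratio is_st_iff_tendsto quot_rep_iff_eventually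
  proof (rule some_equality)
    show "\<exists>m a b. eventually (\<lambda>j. bounded_frac_rep (l j) m (int j) (z j) (a j) (b j)) (ae_filter D) \<and>
        ((\<lambda>j. \<bar>ratio_seq a b j\<bar>) \<longlongrightarrow> \<bar>frac_value z\<bar>) (ae_filter D)"
      using assms tendsto_rabs[OF tendsto_frac_value[OF assms]] unfolding frac_rep_def by blast
  next
    fix w assume "\<exists>m c d. eventually (\<lambda>j. bounded_frac_rep (l j) m (int j) (z j) (c j) (d j)) (ae_filter D) \<and>
        ((\<lambda>j. \<bar>ratio_seq c d j\<bar>) \<longlongrightarrow> w) (ae_filter D)"
    then obtain c d where cd: "frac_rep z c d"
      and w: "((\<lambda>j. \<bar>ratio_seq c d j\<bar>) \<longlongrightarrow> w) (ae_filter D)"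
      unfolding frac_rep_def by blast
    show "w = \<bar>frac_value z\<bar>"
      using w tendsto_rabs[OF tendsto_frac_value[OF cd]]
      by (rule tendsto_unique[OF ae_filter_neq_bot])
  qed
qed

lemma frac_rep_denom_nonzero: "frac_rep z a b \<Longrightarrow> eventually (\<lambda>j. b j \<noteq> 0) (ae_filter D)"
  unfolding frac_rep_def bounded_frac_rep_def by (auto elim: eventually_mono)

lemma frac_rep_add:
  assumes "frac_rep z1 a b" "frac_rep z2 c d"
  shows "frac_rep (\<lambda>j. z1 j + z2 j) (\<lambda>j. a j * d j + c j * b j) (\<lambda>j. b j * d j)"
proof -
  obtain m1 m2 where
      "eventually (\<lambda>j. bounded_frac_rep (l j) m1 (int j) (z1 j) (a j) (b j)) (ae_filter D)"
      "eventually (\<lambda>j. bounded_frac_rep (l j) m2 (int j) (z2 j) (c j) (d j)) (ae_filter D)"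
    using assms unfolding frac_rep_def by blast
  with eventually_greater_l[of 1]
  have "eventually (\<lambda>j. bounded_frac_rep (l j) (m1 + m2 + 1) (int j)
      (z1 j + z2 j) (a j * d j + c j * b j) (b j * d j)) (ae_filter D)"
    by eventually_elim (rule bounded_frac_rep_add, auto)
  then show ?thesis unfolding frac_rep_def by blast
qed

lemma frac_rep_mult:
  assumes "frac_rep z1 a b" "frac_rep z2 c d"
  shows "frac_rep (\<lambda>j. z1 j * z2 j) (\<lambda>j. a j * c j) (\<lambda>j. b j * d j)"
proof -
  obtain m1 m2 where
      "eventually (\<lambda>j. bounded_frac_rep (l j) m1 (int j) (z1 j) (a j) (b j)) (ae_filter D)"
      "eventually (\<lambda>j. bounded_frac_rep (l j) m2 (int j) (z2 j) (c j) (d j)) (ae_filter D)"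
    using assms unfolding frac_rep_def by blast
  with eventually_greater_l[of 1]
  have "eventually (\<lambda>j. bounded_frac_rep (l j) (m1 * m2 + m1 + m2) (int j)
      (z1 j * z2 j) (a j * c j) (b j * d j)) (ae_filter D)"
    by eventually_elim (rule bounded_frac_rep_mult, auto)
  then show ?thesis unfolding frac_rep_def by blast
qed

lemma frac_rep_uminus:
  assumes "frac_rep z a b"
  shows "frac_rep (\<lambda>j. - z j) (\<lambda>j. - a j) b"
proof -
  obtain m where "eventually (\<lambda>j. bounded_frac_rep (l j) m (int j) (z j) (a j) (b j)) (ae_filter D)"
    using assms unfolding frac_rep_def by blast
  then have "eventually (\<lambda>j. bounded_frac_rep (l j) m (int j) (- z j) (- a j) (b j)) (ae_filter D)"
    by (rule eventually_mono) (rule bounded_frac_rep_uminus)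
  then show ?thesis unfolding frac_rep_def by blast
qed

lemma frac_rep_cong:
  assumes "eventually (\<lambda>j. [z' j = z j] (mod int j)) (ae_filter D)" "frac_rep z a b"
  shows "frac_rep z' a b"
proof -
  obtain m where "eventually (\<lambda>j. bounded_frac_rep (l j) m (int j) (z j) (a j) (b j)) (ae_filter D)"
    using assms(2) unfolding frac_rep_def by blast
  with assms(1) have "eventually (\<lambda>j. bounded_frac_rep (l j) m (int j) (z' j) (a j) (b j)) (ae_filter D)"
    by eventually_elim (rule bounded_frac_rep_cong)
  then show ?thesis unfolding frac_rep_def by blast
qed

lemma frac_rep_one: "frac_rep (\<lambda>j. 1) (\<lambda>j. 1) (\<lambda>j. 1)"
proof -
  have "eventually (\<lambda>j. bounded_frac_rep (l j) 1 (int j) 1 1 1) (ae_filter D)"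
    using eventually_greater_l[of 1] by (rule eventually_mono) (rule bounded_frac_rep_one)
  then show ?thesis unfolding frac_rep_def by blast
qed

lemma frac_value_add:
  assumes "frac_rep z1 a b" "frac_rep z2 c d"
  shows "frac_value (\<lambda>j. z1 j + z2 j) = frac_value z1 + frac_value z2"
proof (rule frac_value_eqI[OF frac_rep_add[OF assms]])
  have "eventually (\<lambda>j. ratio_seq a b j + ratio_seq c d j =
      ratio_seq (\<lambda>j. a j * d j + c j * b j) (\<lambda>j. b j * d j) j) (ae_filter D)"
    using frac_rep_denom_nonzero[OF assms(1)] frac_rep_denom_nonzero[OF assms(2)]
    by eventually_elim (simp add: ratio_seq_def field_simps)
  with tendsto_add[OF tendsto_frac_value[OF assms(1)] tendsto_frac_value[OF assms(2)]]
  show "(ratio_seq (\<lambda>j. a j * d j + c j * b j) (\<lambda>j. b j * d j) \<longlongrightarrow>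
      frac_value z1 + frac_value z2) (ae_filter D)"
    by (rule Lim_transform_eventually)
qed

lemma frac_value_mult:
  assumes "frac_rep z1 a b" "frac_rep z2 c d"
  shows "frac_value (\<lambda>j. z1 j * z2 j) = frac_value z1 * frac_value z2"
proof (rule frac_value_eqI[OF frac_rep_mult[OF assms]])
  have "ratio_seq (\<lambda>j. a j * c j) (\<lambda>j. b j * d j) = (\<lambda>j. ratio_seq a b j * ratio_seq c d j)"
    by (simp add: ratio_seq_def fun_eq_iff)
  then show "(ratio_seq (\<lambda>j. a j * c j) (\<lambda>j. b j * d j) \<longlongrightarrow>
      frac_value z1 * frac_value z2) (ae_filter D)"
    using tendsto_mult[OF tendsto_frac_value[OF assms(1)] tendsto_frac_value[OF assms(2)]] by simp
qed

lemma frac_value_uminus: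
  assumes "frac_rep z a b"
  shows "frac_value (\<lambda>j. - z j) = - frac_value z"
proof (rule frac_value_eqI[OF frac_rep_uminus[OF assms]])
  have "ratio_seq (\<lambda>j. - a j) b = (\<lambda>j. - ratio_seq a b j)"
    by (simp add: ratio_seq_def fun_eq_iff)
  then show "(ratio_seq (\<lambda>j. - a j) b \<longlongrightarrow> - frac_value z) (ae_filter D)"
    using tendsto_minus[OF tendsto_frac_value[OF assms]] by simp
qed

lemma frac_value_cong:
  assumes "eventually (\<lambda>j. [z' j = z j] (mod int j)) (ae_filter D)" "frac_rep z a b"
  shows "frac_value z' = frac_value z"
  using frac_value_eqI[OF frac_rep_cong[OF assms] tendsto_frac_value[OF assms(2)]] .

lemma frac_value_one: "frac_value (\<lambda>j. 1) = 1"
proof (rule frac_value_eqI[OF frac_rep_one])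
  have "ratio_seq (\<lambda>j. 1) (\<lambda>j. 1) = (\<lambda>j. 1)"
    by (simp add: ratio_seq_def fun_eq_iff)
  then show "(ratio_seq (\<lambda>j. 1) (\<lambda>j. 1) \<longlongrightarrow> 1) (ae_filter D)"
    by simp
qed

definition std_value :: "(nat \<Rightarrow> int) \<Rightarrow> real" where
  "std_value x = frac_value (red_q x)"

lemma Kl_frac_rep:
  assumes "x \<in> Kl D l N"
  obtains a b where "frac_rep (red_q x) a b"
  using assms by (auto simp: Kl_def mem_Fl_iff)

lemma cong_red_q: "[red_q x j = x j] (mod int j)"
  by (simp add: red_q_def)

lemma Kl_mod_N:
  assumes "frac_rep z a b" "\<forall>j. [f j = z j] (mod int j)"
  shows "(\<lambda>j. f j mod int (N j)) \<in> Kl D l N" "std_value (\<lambda>j. f j mod int (N j)) = frac_value z"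
proof -
  have "eventually (\<lambda>j. [red_q (\<lambda>j. f j mod int (N j)) j = z j] (mod int j)) (ae_filter D)"
    using dvd_N unfolding eventually_ae_filter[symmetric]
  proof eventually_elim
    case (elim j)
    then have "int j dvd int (N j)" by simp
    then have "[f j mod int (N j) = f j] (mod int j)"
      by (rule cong_dvd_modulus[rotated]) simp
    then show ?case using cong_red_q assms(2) by (meson cong_trans)
  qed
  then have "frac_rep (red_q (\<lambda>j. f j mod int (N j))) a b"
    and "std_value (\<lambda>j. f j mod int (N j)) = frac_value z"
    unfolding std_value_def using assms(1) by (auto intro: frac_rep_cong frac_value_cong)
  moreover have "(\<lambda>j. f j mod int (N j)) \<in> Kcar N"
    using N_pos by (simp add: Kcar_def)
  ultimately show "(\<lambda>j. f j mod int (N j)) \<in> Kl D l N" "std_value (\<lambda>j. f j mod int (N j)) = frac_value z"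
    by (auto simp: Kl_def mem_Fl_iff)
qed

lemma Kl_addK:
  assumes "x \<in> Kl D l N" "y \<in> Kl D l N"
  shows "addK N x y \<in> Kl D l N" "std_value (addK N x y) = std_value x + std_value y"
proof -
  obtain a b c d where x: "frac_rep (red_q x) a b" and y: "frac_rep (red_q y) c d"
    using assms by (meson Kl_frac_rep)
  have "\<forall>j. [x j + y j = red_q x j + red_q y j] (mod int j)"
    by (simp add: cong_add cong_red_q cong_sym)
  from Kl_mod_N[OF frac_rep_add[OF x y] this]
  show "addK N x y \<in> Kl D l N" "std_value (addK N x y) = std_value x + std_value y"
    unfolding addK_def std_value_def frac_value_add[OF x y] .
qed

lemma Kl_mulK:
  assumes "x \<in> Kl D l N" "y \<in> Kl D l N"
  shows "mulK N x y \<in> Kl D l N" "std_value (mulK N x y) = std_value x * std_value y"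
proof -
  obtain a b c d where x: "frac_rep (red_q x) a b" and y: "frac_rep (red_q y) c d"
    using assms by (meson Kl_frac_rep)
  have "\<forall>j. [x j * y j = red_q x j * red_q y j] (mod int j)"
    by (simp add: cong_mult cong_red_q cong_sym)
  from Kl_mod_N[OF frac_rep_mult[OF x y] this]
  show "mulK N x y \<in> Kl D l N" "std_value (mulK N x y) = std_value x * std_value y"
    unfolding mulK_def std_value_def frac_value_mult[OF x y] .
qed

lemma Kl_negK:
  assumes "x \<in> Kl D l N"
  shows "negK N x \<in> Kl D l N" "std_value (negK N x) = - std_value x"
proof -
  obtain a b where x: "frac_rep (red_q x) a b"
    using assms by (meson Kl_frac_rep)
  have "\<forall>j. [- x j = - red_q x j] (mod int j)"
    by (simp add: cong_minus_minus_iff cong_red_q cong_sym)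
  from Kl_mod_N[OF frac_rep_uminus[OF x] this]
  show "negK N x \<in> Kl D l N" "std_value (negK N x) = - std_value x"
    unfolding negK_def std_value_def frac_value_uminus[OF x] .
qed

lemma Kl_oneK: "oneK N \<in> Kl D l N" "std_value (oneK N) = 1"
  using Kl_mod_N[OF frac_rep_one, of "\<lambda>j. 1"]
  unfolding oneK_def frac_value_one by auto

lemma dK_eq_dist_std_value:
  assumes "x \<in> Kl D l N" "y \<in> Kl D l N"
  shows "dK D l x y = \<bar>std_value x - std_value y\<bar>"
proof -
  obtain a b c d where x: "frac_rep (red_q x) a b" and y: "frac_rep (red_q y) c d"
    using assms by (meson Kl_frac_rep)
  have "frac_rep (\<lambda>j. red_q x j - red_q y j) (\<lambda>j. a j * d j + - c j * b j) (\<lambda>j. b j * d j)"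
    using frac_rep_add[OF x frac_rep_uminus[OF y]] by simp
  moreover have "frac_value (\<lambda>j. red_q x j - red_q y j) = std_value x - std_value y"
    using frac_value_add[OF x frac_rep_uminus[OF y]] frac_value_uminus[OF y]
    by (simp add: std_value_def)
  ultimately show ?thesis
    unfolding dK_def dF_def by (simp add: fnorm_eq_abs_frac_value)
qed

lemma eventually_l_invertible: "eventually (\<lambda>j. \<exists>u. [l j * u = 1] (mod int j)) (ae_filter D)"
proof -
  have "eventually (\<lambda>j. prime j) (ae_filter D)"
    using primes by (simp add: eventually_ae_filter ae_def)
  moreover have "eventually (\<lambda>j. l j ^ 1 < int j) (ae_filter D)"
    using l_powers_below unfolding eventually_ae_filter by blast
  ultimately show ?thesis using eventually_greater_l[of 0]
  proof eventually_elim
    case (elim j)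
    then have "\<not> int j dvd l j" by (auto dest: zdvd_imp_le)
    moreover have "prime (int j)" using elim by simp
    ultimately have "coprime (l j) (int j)"
      by (simp add: prime_imp_coprime coprime_commute)
    then show ?case by (rule cong_solve_coprime_int)
  qed
qed

lemma tendsto_ratio_floor: "(ratio_seq (\<lambda>j. \<lfloor>r * of_int (l j)\<rfloor>) l \<longlongrightarrow> r) (ae_filter D)"
  unfolding tendsto_iff dist_real_def
proof (intro allI impI)
  fix e :: real assume "0 < e"
  show "eventually (\<lambda>j. \<bar>ratio_seq (\<lambda>j. \<lfloor>r * of_int (l j)\<rfloor>) l j - r\<bar> < e) (ae_filter D)"
    using eventually_greater_l[of "\<lceil>1 / e\<rceil>"]
  proof eventually_elim
    case (elim j)
    have "1 / e \<le> of_int \<lceil>1 / e\<rceil>" by (rule le_of_int_ceiling)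
    also have "\<dots> < of_int (l j)" using elim by simp
    finally have "1 / e < of_int (l j)" .
    moreover have "0 < 1 / e" using \<open>0 < e\<close> by simp
    ultimately have "0 < real_of_int (l j)" by linarith
    moreover have "1 < e * of_int (l j)"
      using \<open>1 / e < of_int (l j)\<close> \<open>0 < e\<close> by (simp add: divide_less_eq mult.commute)
    ultimately have "0 < l j" "1 / of_int (l j) < e"
      by (simp_all add: divide_less_eq)
    then show ?case
      unfolding ratio_seq_def using abs_floor_mult_divide_less[of "l j" r] by linarith
  qed
qed

lemma std_value_surj: "std_value ` Kl D l N = UNIV"
proof (rule sym, rule UNIV_eq_I)
  fix r :: real
  obtain m :: nat where m: "\<bar>r\<bar> + 1 < real m"
    using reals_Archimedean2 by blast
  then have "1 < m" using abs_ge_zero[of r] by linarith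
  then have "2 \<le> m" by simp
  define k where "k = (\<lambda>j. \<lfloor>r * of_int (l j)\<rfloor>)"
  define u where "u j = (SOME u. [l j * u = 1] (mod int j))" for j
  have "eventually (\<lambda>j. bounded_frac_rep (l j) m (int j) (k j * u j) (k j) (l j)) (ae_filter D)"
    using eventually_l_invertible eventually_greater_l[of "int m"]
  proof eventually_elim
    case (elim j)
    from elim(1) have "[l j * u j = 1] (mod int j)" unfolding u_def by (rule someI_ex)
    then show ?case
      unfolding k_def by (rule bounded_frac_rep_floor[OF less_imp_le[OF m] \<open>2 \<le> m\<close> elim(2)])
  qed
  then have rep: "frac_rep (\<lambda>j. k j * u j) k l" unfolding frac_rep_def by blast
  have val: "frac_value (\<lambda>j. k j * u j) = r"
    using rep tendsto_ratio_floor[of r] unfolding k_def by (rule frac_value_eqI)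
  have "\<forall>j. [k j * u j = k j * u j] (mod int j)" by simp
  note x = Kl_mod_N[OF rep this]
  show "r \<in> std_value ` Kl D l N"
  proof (rule image_eqI)
    show "(\<lambda>j. k j * u j mod int (N j)) \<in> Kl D l N" by (rule x(1))
    show "r = std_value (\<lambda>j. k j * u j mod int (N j))" using x(2) val by simp
  qed
qed

lemma approx_iff_std_value_eq:
  assumes "x \<in> Kl D l N" "y \<in> Kl D l N"
  shows "approx D l x y \<longleftrightarrow> std_value x = std_value y"
proof
  assume approx: "approx D l x y"
  show "std_value x = std_value y"
  proof (rule ccontr)
    assume "std_value x \<noteq> std_value y"
    then have "0 < \<bar>std_value x - std_value y\<bar>" by simp
    then obtain n where "inverse (real (Suc n)) < \<bar>std_value x - std_value y\<bar>"
      using reals_Archimedean by blast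
    moreover have "dK D l x y \<le> 1 / real (Suc n)"
      using approx unfolding approx_def by (metis zero_less_Suc)
    ultimately show False
      using dK_eq_dist_std_value[OF assms] by (simp add: inverse_eq_divide)
  qed
qed (simp add: approx_def dK_eq_dist_std_value[OF assms])

lemma approx_rel_eq_kernel_on: "approx_rel D l N = kernel_on (Kl D l N) std_value"
  by (auto simp: approx_rel_def kernel_on_def approx_iff_std_value_eq)

end

theorem mainTheorem5:
  fixes D :: "nat set set" and l :: "nat \<Rightarrow> int" and N :: "nat \<Rightarrow> nat"
  assumes "nonprincipal_ultrafilter D"
    and "{p. prime p} \<in> D"
    and "\<forall>k::int. ae D (\<lambda>j. k < l j)"
    and "\<forall>n::nat. ae D (\<lambda>j. l j ^ n < int j)"
    and "\<forall>j. 0 < N j"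
    and "ae D (\<lambda>j. j \<le> N j)"
    and "ae D (\<lambda>j. j dvd N j)"
  shows "(\<forall>x\<in>Kl D l N. \<forall>y\<in>Kl D l N.
            addK N x y \<in> Kl D l N \<and> mulK N x y \<in> Kl D l N \<and> negK N x \<in> Kl D l N)
       \<and> oneK N \<in> Kl D l N
       \<and> equiv (Kl D l N) (approx_rel D l N)
       \<and> (\<forall>x\<in>Kl D l N. \<forall>x'\<in>Kl D l N. \<forall>y\<in>Kl D l N. \<forall>y'\<in>Kl D l N.
            approx D l x x' \<and> approx D l y y' \<longrightarrow>
              approx D l (addK N x y) (addK N x' y') \<and>
              approx D l (mulK N x y) (mulK N x' y') \<and>
              approx D l (negK N x) (negK N x'))
       \<and> (\<exists>\<psi> :: (nat \<Rightarrow> int) set \<Rightarrow> real.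
            bij_betw \<psi> (Kl D l N // approx_rel D l N) UNIV
          \<and> \<psi> (approx_rel D l N `` {oneK N}) = 1
          \<and> (\<forall>x\<in>Kl D l N. \<forall>y\<in>Kl D l N.
               \<psi> (approx_rel D l N `` {addK N x y}) =
                 \<psi> (approx_rel D l N `` {x}) + \<psi> (approx_rel D l N `` {y})
             \<and> \<psi> (approx_rel D l N `` {mulK N x y}) =
                 \<psi> (approx_rel D l N `` {x}) * \<psi> (approx_rel D l N `` {y})
             \<and> dK D l x y = \<bar>\<psi> (approx_rel D l N `` {x}) - \<psi> (approx_rel D l N `` {y})\<bar>))"
proof -
  interpret local_ultraproduct D l N
    using assms
    by (simp add: local_ultraproduct_def local_ultraproduct_axioms_def index_ultrafilter_def)
  let ?K = "Kl D l N" and ?R = "approx_rel D l N"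
  define \<psi> where "\<psi> C = the_elem (std_value ` C)" for C
  have \<psi>_class: "\<psi> (?R `` {x}) = std_value x" if "x \<in> ?K" for x
    using the_elem_image_kernel_on_class[OF that, of std_value]
    by (simp add: \<psi>_def approx_rel_eq_kernel_on)
  have equiv: "equiv ?K ?R"
    unfolding approx_rel_eq_kernel_on by (rule equiv_kernel_on)
  have bij: "bij_betw \<psi> (?K // ?R) UNIV"
    unfolding \<psi>_def approx_rel_eq_kernel_on std_value_surj[symmetric]
    by (rule bij_betw_the_elem_image_quotient_kernel_on)
  show ?thesis
    by (intro conjI exI[of _ \<psi>])
      (simp_all add: equiv bij \<psi>_class Kl_addK Kl_mulK Kl_negK Kl_oneK
        approx_iff_std_value_eq dK_eq_dist_std_value)
qed

end
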